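(* Assume $a/b>\sqrt{2}$. Every self-intersected 4-periodic of the elliptic billiard $x^2/a^2+y^2/b^2=1$ has perimeter $$L=\frac{4a^2}{c},\qquad c^2=a^2-b^2.$$ In particular the perimeter is the same for all members of the family.
   Context: The elliptic billiard is the ellipse $\mathcal{E}: x^2/a^2+y^2/b^2=1$ with $a>b>0$. Let $c=\sqrt{a^2-b^2}$; the foci are $f_{1}=(-c,0)$ and $f_{2}=(c,0)$. An $N$-periodic is a closed billiard trajectory with $N$ bounces $P_1,\dots,P_N\in\mathcal{E}$: at each $P_i$ the normal to $\mathcal{E}$ bisects the angle between the segments $P_{i-1}P_i$ and $P_iP_{i+1}$ (indices mod $N$). All segments of such a trajectory are tangent to a fixed conic confocal with $\mathcal{E}$ (the caustic). Self-intersected 4-periodics: for $a/b>\sqrt2$ these are the 4-periodics whose caustic is the confocal hyperbola $x^2/a''^2-y^2/b''^2=1$ with $a''=a\sqrt{a^2-2b^2}/c$ and $b''=b^2/c$. They form a one-parameter family which can be parametrized by $u$ with $|u|\le u_{\max}:=\frac{a}{c^2}\sqrt{a^2-2b^2}$ via $P_1=(au,\,b\sqrt{1-u^2})$, $P_3=(-au,\,b\sqrt{1-u^2})$, $P_2=\left(-\frac{a\sqrt{a^2(a^2-2b^2)-c^4u^2}}{c^2\sqrt{1-u^2}},\,-\frac{b^3}{c^2\sqrt{1-u^2}}\right)$, $P_4=\left(\frac{a\sqrt{a^2(a^2-2b^2)-c^4u^2}}{c^2\sqrt{1-u^2}},\,-\frac{b^3}{c^2\sqrt{1-u^2}}\right)$.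 The perimeter is $|P_1P_2|+|P_2P_3|+|P_3P_4|+|P_4P_1|$. *)

theory Defs
  imports "HOL-Analysis.Analysis"
begin

definition foc :: "real \<Rightarrow> real \<Rightarrow> real" where
  "foc a b = sqrt (a^2 - b^2)"

definition umax :: "real \<Rightarrow> real \<Rightarrow> real" where
  "umax a b = a / (foc a b)^2 * sqrt (a^2 - 2*b^2)"

definition P1 :: "real \<Rightarrow> real \<Rightarrow> real \<Rightarrow> real \<times> real" where
  "P1 a b u = (a*u, b * sqrt (1 - u^2))"

definition P3 :: "real \<Rightarrow> real \<Rightarrow> real \<Rightarrow> real \<times> real" where
  "P3 a b u = (-(a*u), b * sqrt (1 - u^2))"

definition P2 :: "real \<Rightarrow> real \<Rightarrow> real \<Rightarrow> real \<times> real" where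
  "P2 a b u = (let c = foc a b in
     (-(a * sqrt (a^2*(a^2 - 2*b^2) - c^4*u^2) / (c^2 * sqrt (1 - u^2))),
      -(b^3 / (c^2 * sqrt (1 - u^2)))))"

definition P4 :: "real \<Rightarrow> real \<Rightarrow> real \<Rightarrow> real \<times> real" where
  "P4 a b u = (let c = foc a b in
     (a * sqrt (a^2*(a^2 - 2*b^2) - c^4*u^2) / (c^2 * sqrt (1 - u^2)),
      -(b^3 / (c^2 * sqrt (1 - u^2)))))"

definition perimeter4 :: "real \<Rightarrow> real \<Rightarrow> real \<Rightarrow> real" where
  "perimeter4 a b u = dist (P1 a b u) (P2 a b u) + dist (P2 a b u) (P3 a b u)
     + dist (P3 a b u) (P4 a b u) + dist (P4 a b u) (P1 a b u)"

end

theory Submission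
  imports Defs
begin

text \<open>Write \<open>s = sqrt (1 - u\<^sup>2)\<close> and \<open>r = sqrt (a\<^sup>2 (a\<^sup>2 - 2b\<^sup>2) - c\<^sup>4 u\<^sup>2)\<close>.
  Squaring out shows that each side of the 4-periodic has length \<open>a\<^sup>2/c \<plusminus> u r/(c s)\<close>;
  the sides \<open>P\<^sub>1P\<^sub>2\<close>, \<open>P\<^sub>3P\<^sub>4\<close> carry the sign \<open>+\<close> and \<open>P\<^sub>2P\<^sub>3\<close>, \<open>P\<^sub>4P\<^sub>1\<close> the sign \<open>-\<close>,
  so the \<open>u\<close>-dependent parts cancel in the perimeter.  Replacing \<open>r\<close> by \<open>-r\<close> and reflecting
  in the \<open>y\<close>-axis reduces all four sides to the single side \<open>P\<^sub>1P\<^sub>2\<close>.\<close>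

lemma dist_reflect_first:
  fixes x1 y1 x2 y2 :: real
  shows "dist (- x1, y1) (- x2, y2) = dist (x1, y1) (x2, y2)"
  by (simp add: dist_Pair_Pair dist_real_def abs_minus_commute)

context
  fixes a b c u r s :: real
  assumes c_pos: "c > 0" and s_pos: "s > 0"
    and c_sq: "c\<^sup>2 = a\<^sup>2 - b\<^sup>2"
    and s_sq: "s\<^sup>2 = 1 - u\<^sup>2"
    and r_sq: "r\<^sup>2 = a\<^sup>2 * (a\<^sup>2 - 2 * b\<^sup>2) - c ^ 4 * u\<^sup>2"
begin

lemma side_length_sq_eq:
  "(a * u + a * r / (c\<^sup>2 * s))\<^sup>2 + (b * s + b ^ 3 / (c\<^sup>2 * s))\<^sup>2
     = (a\<^sup>2 / c + u * r / (c * s))\<^sup>2"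
  using c_pos s_pos c_sq s_sq r_sq by (simp add: field_simps power2_eq_square) algebra

lemma abs_ur_le:
  "\<bar>u * r\<bar> \<le> a\<^sup>2 * s"
proof -
  have "(a\<^sup>2 * s)\<^sup>2 - (u * r)\<^sup>2 = (a\<^sup>2 - c\<^sup>2 * u\<^sup>2)\<^sup>2"
    using c_sq s_sq r_sq by (simp add: power_mult_distrib) algebra
  then have "\<bar>u * r\<bar>\<^sup>2 \<le> (a\<^sup>2 * s)\<^sup>2"
    by (metis diff_ge_0_iff_ge power2_abs zero_le_power2)
  then show ?thesis
    by (rule power2_le_imp_le) (use s_pos in simp)
qed

lemma side_length_eq:
  "dist (a * u, b * s) (- (a * r / (c\<^sup>2 * s)), - (b ^ 3 / (c\<^sup>2 * s)))
     = a\<^sup>2 / c + u * r / (c * s)"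
proof -
  have "a\<^sup>2 / c + u * r / (c * s) \<ge> 0"
    using abs_ur_le c_pos s_pos by (auto simp: field_simps abs_le_iff)
  then show ?thesis
    using side_length_sq_eq by (simp add: dist_Pair_Pair dist_real_def power2_commute)
qed

end

lemma self_intersected_parameter_range:
  fixes a b u :: real
  assumes "a > b" "b > 0" "a / b > sqrt 2" "\<bar>u\<bar> \<le> umax a b"
  shows "(foc a b) ^ 4 * u\<^sup>2 \<le> a\<^sup>2 * (a\<^sup>2 - 2 * b\<^sup>2)" and "u\<^sup>2 < 1"
proof -
  define c where "c = foc a b"
  have c_sq: "c\<^sup>2 = a\<^sup>2 - b\<^sup>2" and c_pos: "c > 0"
    unfolding c_def foc_def using assms by (simp_all add: power_strict_mono)
  have "(sqrt 2 * b)\<^sup>2 < a\<^sup>2"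
    using assms by (intro power_strict_mono) (simp_all add: pos_less_divide_eq)
  then have ab: "a\<^sup>2 - 2 * b\<^sup>2 > 0"
    by (simp add: power_mult_distrib)
  have "u\<^sup>2 \<le> (umax a b)\<^sup>2"
    using assms(4) by (metis abs_le_square_iff abs_of_nonneg abs_ge_zero order_trans)
  also have "(umax a b)\<^sup>2 = a\<^sup>2 * (a\<^sup>2 - 2 * b\<^sup>2) / c ^ 4"
    unfolding umax_def c_def[symmetric] using ab by (simp add: power_divide power_mult_distrib)
  finally show range: "c ^ 4 * u\<^sup>2 \<le> a\<^sup>2 * (a\<^sup>2 - 2 * b\<^sup>2)"
    using c_pos by (simp add: pos_le_divide_eq mult.commute)
  have "c ^ 4 = (a\<^sup>2 - b\<^sup>2)\<^sup>2"
    using c_sq by (metis power_mult numeral_Bit0 mult_2 numeral_One)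
  then have "a\<^sup>2 * (a\<^sup>2 - 2 * b\<^sup>2) < c ^ 4"
    using assms by (simp add: power2_eq_square algebra_simps)
  then show "u\<^sup>2 < 1"
    using range c_pos by (smt (verit) mult_less_cancel_left2 zero_less_power)
qed

theorem mainTheorem1:
  fixes a b u :: real
  assumes "a > b" "b > 0" "a / b > sqrt 2" "\<bar>u\<bar> \<le> umax a b"
  shows "perimeter4 a b u = 4 * a^2 / foc a b"
proof -
  define c s r where "c = foc a b" and "s = sqrt (1 - u\<^sup>2)"
    and "r = sqrt (a\<^sup>2 * (a\<^sup>2 - 2 * b\<^sup>2) - c ^ 4 * u\<^sup>2)"
  note range = self_intersected_parameter_range[OF assms, folded c_def]
  have c_pos: "c > 0" and c_sq: "c\<^sup>2 = a\<^sup>2 - b\<^sup>2"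
    unfolding c_def foc_def using assms by (simp_all add: power_strict_mono)
  have s_pos: "s > 0" and s_sq: "s\<^sup>2 = 1 - u\<^sup>2"
    unfolding s_def using range(2) by simp_all
  have r_sq: "r\<^sup>2 = a\<^sup>2 * (a\<^sup>2 - 2 * b\<^sup>2) - c ^ 4 * u\<^sup>2" and "(- r)\<^sup>2 = r\<^sup>2"
    unfolding r_def using range(1) by simp_all
  note side_plus = side_length_eq[OF c_pos s_pos c_sq s_sq r_sq]
   and side_minus = side_length_eq[OF c_pos s_pos c_sq s_sq r_sq[folded \<open>(- r)\<^sup>2 = r\<^sup>2\<close>]]
  have vertices: "P1 a b u = (a * u, b * s)" "P3 a b u = (- (a * u), b * s)"
    "P2 a b u = (- (a * r / (c\<^sup>2 * s)), - (b ^ 3 / (c\<^sup>2 * s)))"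
    "P4 a b u = (a * r / (c\<^sup>2 * s), - (b ^ 3 / (c\<^sup>2 * s)))"
    unfolding P1_def P2_def P3_def P4_def c_def s_def r_def Let_def by simp_all
  have "perimeter4 a b u = 2 * (a\<^sup>2 / c + u * r / (c * s)) + 2 * (a\<^sup>2 / c + u * - r / (c * s))"
    unfolding perimeter4_def vertices
    using side_plus side_minus dist_reflect_first[of "a * u" "b * s" "a * r / (c\<^sup>2 * s)"]
      dist_reflect_first[of "a * u" "b * s" "- (a * r / (c\<^sup>2 * s))"]
    by (simp add: dist_commute)
  then show ?thesis
    unfolding c_def by simp
qed

end
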